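(* Let $M=p_1^{n_1}\cdots p_K^{n_K}$ with distinct primes $p_\nu$ and $n_\nu\in\mathbb{N}$, and $R=\{r\in\mathbb{Z}_M:(r,M)=1\}$. For $\nu=1,\dots,K$, let $x_\nu,x'_\nu\in\mathbb{Z}_M$ with $(x_\nu,M)=(x'_\nu,M)=M/p_\nu^{\alpha_\nu}$, where $\alpha_1,\dots,\alpha_K\ge1$. Then there exists $r\in R$ such that $rx_\nu=x'_\nu$ for all $\nu=1,\dots,K$.
   Context: $(x,M)$ denotes $\gcd(x,M)$ for $x\in\mathbb{Z}_M$. *)

theory Defs
  imports "HOL-Number_Theory.Number_Theory"
begin

end

theory Submission
  imports Defs
begin

text \<open>Write \<open>q\<^sub>\<nu> = p\<^sub>\<nu>^\<alpha>\<^sub>\<nu>\<close>, so that \<open>x\<^sub>\<nu> = (M/q\<^sub>\<nu>) u\<close> and \<open>x'\<^sub>\<nu> = (M/q\<^sub>\<nu>) v\<close> with \<open>u, v\<close> units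
  modulo \<open>q\<^sub>\<nu>\<close>. Hence \<open>s\<^sub>\<nu> x\<^sub>\<nu> = x'\<^sub>\<nu>\<close> modulo \<open>M\<close> for the unit \<open>s\<^sub>\<nu> = v u\<^sup>-\<^sup>1\<close> of \<open>\<int>/q\<^sub>\<nu>\<close>,
  and this equation only depends on \<open>s\<^sub>\<nu>\<close> modulo \<open>q\<^sub>\<nu>\<close>. The Chinese remainder theorem
  yields one \<open>r\<close> congruent to every \<open>s\<^sub>\<nu>\<close> modulo \<open>q\<^sub>\<nu>\<close>; it is prime to every \<open>p\<^sub>\<nu>\<close>,
  hence a unit modulo \<open>M\<close>.\<close>

lemma cong_mult_right_mod_div_gcd:
  fixes a b x m :: "'a :: {unique_euclidean_semiring, euclidean_semiring_gcd}"
  assumes "[a = b] (mod m div gcd x m)"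
  shows "[a * x = b * x] (mod m)"
proof -
  define g where "g = gcd x m"
  have "[a * (x div g) = b * (x div g)] (mod m div g)"
    using cong_scalar_right[OF assms] by (simp add: g_def)
  then have "[a * (x div g) * g = b * (x div g) * g] (mod m div g * g)"
    unfolding cong_def mod_mult_mult2 by simp
  moreover have "m div g * g = m" and "x div g * g = x"
    by (simp_all add: g_def)
  ultimately show ?thesis
    by (simp add: mult.assoc)
qed

lemma cong_solve_same_gcd_nat:
  fixes x y m :: nat
  assumes same_gcd: "gcd x m = gcd y m"
  shows "\<exists>s. coprime s (m div gcd x m) \<and> [s * x = y] (mod m)"
proof (cases "gcd x m = 0")
  case True
  with same_gcd show ?thesis
    by (intro exI[of _ 1]) simp
next
  case False
  define d where "d = gcd x m"
  define u where "u = x div d"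
  define v where "v = y div d"
  define q where "q = m div d"
  have x_eq: "x = u * d" and m_eq: "m = q * d"
    by (simp_all add: d_def u_def q_def)
  have y_eq: "y = v * d"
    using same_gcd by (simp add: d_def v_def)
  have "coprime u q"
    using False by (simp add: d_def u_def q_def div_gcd_coprime)
  have "coprime v q"
    using False same_gcd by (simp add: d_def v_def q_def div_gcd_coprime)
  obtain w where w: "[u * w = 1] (mod q)"
    using cong_solve_coprime_nat[OF \<open>coprime u q\<close>] by auto
  have su: "[w * v * u = v] (mod q)"
    using cong_scalar_right[OF w, of v] by (simp add: ac_simps)
  have "coprime (w * v) q"
    using cong_imp_coprime[OF cong_sym[OF su] \<open>coprime v q\<close>] by simp
  moreover have "[w * v * x = y] (mod m)"
    using su by (simp add: x_eq y_eq m_eq cong_def mod_mult_mult2 flip: mult.assoc)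
  ultimately show ?thesis
    unfolding q_def d_def by blast
qed

lemma pairwise_coprime_prime_powers:
  fixes p :: "'i \<Rightarrow> 'a :: factorial_semiring_gcd"
  assumes "inj_on p I" and "\<And>i. i \<in> I \<Longrightarrow> prime (p i)"
  shows "\<forall>i\<in>I. \<forall>j\<in>I. i \<noteq> j \<longrightarrow> coprime (p i ^ a i) (p j ^ b j)"
proof (intro ballI impI)
  fix i j
  assume "i \<in> I" "j \<in> I" "i \<noteq> j"
  with assms(1) have "p i \<noteq> p j"
    by (auto dest: inj_onD)
  with assms(2) \<open>i \<in> I\<close> \<open>j \<in> I\<close> have "coprime (p i) (p j)"
    by (intro primes_coprime)
  then show "coprime (p i ^ a i) (p j ^ b j)"
    by simp
qed

theorem lemma3p6:
  fixes M K :: nat and p n \<alpha> :: "nat \<Rightarrow> nat" and x x' :: "nat \<Rightarrow> nat"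
  assumes primes: "\<And>\<nu>. \<nu> \<in> {1..K} \<Longrightarrow> prime (p \<nu>)"
    and distinct: "inj_on p {1..K}"
    and exps: "\<And>\<nu>. \<nu> \<in> {1..K} \<Longrightarrow> n \<nu> \<ge> 1"
    and M_def: "M = (\<Prod>\<nu>\<in>{1..K}. p \<nu> ^ n \<nu>)"
    and x_range: "\<And>\<nu>. \<nu> \<in> {1..K} \<Longrightarrow> x \<nu> < M \<and> x' \<nu> < M"
    and alpha_ge: "\<And>\<nu>. \<nu> \<in> {1..K} \<Longrightarrow> \<alpha> \<nu> \<ge> 1"
    and alpha_dvd: "\<And>\<nu>. \<nu> \<in> {1..K} \<Longrightarrow> p \<nu> ^ \<alpha> \<nu> dvd M"
    and gcd_x: "\<And>\<nu>. \<nu> \<in> {1..K} \<Longrightarrow> gcd (x \<nu>) M = M div p \<nu> ^ \<alpha> \<nu>"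
    and gcd_x': "\<And>\<nu>. \<nu> \<in> {1..K} \<Longrightarrow> gcd (x' \<nu>) M = M div p \<nu> ^ \<alpha> \<nu>"
  shows "\<exists>r. r < M \<and> coprime r M \<and> (\<forall>\<nu>\<in>{1..K}. [r * x \<nu> = x' \<nu>] (mod M))"
proof -
  define q where "q \<nu> = p \<nu> ^ \<alpha> \<nu>" for \<nu>
  have M_pos: "M > 0"
    unfolding M_def using primes by (simp add: prime_gt_0_nat)
  have q_dvd: "q \<nu> dvd M" and q_eq: "M div gcd (x \<nu>) M = q \<nu>" if "\<nu> \<in> {1..K}" for \<nu>
    using alpha_dvd[OF that] gcd_x[OF that] M_pos by (auto simp: q_def div_div_eq_right)
  have "\<forall>\<nu>\<in>{1..K}. \<exists>s. coprime s (q \<nu>) \<and> [s * x \<nu> = x' \<nu>] (mod M)"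
    using cong_solve_same_gcd_nat gcd_x gcd_x' q_eq by metis
  then obtain s where s: "\<forall>\<nu>\<in>{1..K}. coprime (s \<nu>) (q \<nu>) \<and> [s \<nu> * x \<nu> = x' \<nu>] (mod M)"
    by (metis bchoice)
  obtain r0 where r0: "\<forall>\<nu>\<in>{1..K}. [r0 = s \<nu>] (mod q \<nu>)"
    using chinese_remainder_nat[OF finite_atLeastAtMost pairwise_coprime_prime_powers[OF distinct primes]]
    unfolding q_def by blast
  define r where "r = r0 mod M"
  have r_cong: "[r = s \<nu>] (mod q \<nu>)" if "\<nu> \<in> {1..K}" for \<nu>
    using r0 q_dvd[OF that] that unfolding r_def by (metis cong_def mod_mod_cancel)
  have "coprime r (p \<nu>)" if "\<nu> \<in> {1..K}" for \<nu>
    using cong_imp_coprime[OF cong_sym[OF r_cong[OF that]]] s[rule_format, OF that] alpha_ge[OF that]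
    by (auto simp: q_def)
  then have "coprime r M"
    unfolding M_def by (intro prod_coprime_right) simp
  moreover have "[r * x \<nu> = x' \<nu>] (mod M)" if "\<nu> \<in> {1..K}" for \<nu>
    using cong_mult_right_mod_div_gcd[of r "s \<nu>" M "x \<nu>"] r_cong[OF that] q_eq[OF that] s that
    by (metis cong_trans)
  moreover have "r < M"
    using M_pos by (simp add: r_def)
  ultimately show ?thesis
    by blast
qed

end
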